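(* Let $A\in\mathbb{R}^{n\times d}$ have rows $a_1,\dots,a_n$ that are independent Gaussian random vectors, each with independent coordinates of variance $\sigma^2$ (arbitrary means), and let $b\in\mathbb{R}^n$ be fixed. Then for any $R>0$, \[ \Pr\Big[\max_{I\in\binom{[n]}{d}}\|x_I\|\ge R\|b\|_\infty\Big]\le\frac{2d^2n^d}{\sigma R\sqrt{2\pi}}, \] where $x_I=A_I^{-1}b_I$.
   Context: $A_I$ and $b_I$ denote the rows of $A$ and entries of $b$ indexed by $I\in\binom{[n]}{d}$; $A_I$ is almost surely invertible. *)

theory Defs
  imports "HOL-Probability.Probability" "Jordan_Normal_Form.Gauss_Jordan_Elimination"
begin

text \<open>Random matrix A: entries A(i,j), i < n (rows), j < d (columns), independent,
  A(i,j) ~ N(mu i j, sg^2).  Realised as the product measure.\<close>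
definition gauss_matrix_measure ::
  "nat \<Rightarrow> nat \<Rightarrow> (nat \<Rightarrow> nat \<Rightarrow> real) \<Rightarrow> real \<Rightarrow> (nat \<times> nat \<Rightarrow> real) measure" where
  "gauss_matrix_measure n d mu sg =
     PiM ({..<n} \<times> {..<d}) (\<lambda>(i,j). density lborel (normal_density (mu i j) sg))"

definition sub_rows :: "nat \<Rightarrow> (nat \<times> nat \<Rightarrow> real) \<Rightarrow> nat set \<Rightarrow> real mat" where
  "sub_rows d A I = mat d d (\<lambda>(k,l). A (sorted_list_of_set I ! k, l))"

definition sub_vec :: "nat \<Rightarrow> (nat \<Rightarrow> real) \<Rightarrow> nat set \<Rightarrow> real vec" where
  "sub_vec d b I = vec d (\<lambda>k. b (sorted_list_of_set I ! k))"

definition vnorm :: "real vec \<Rightarrow> real" where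
  "vnorm x = sqrt (\<Sum>k<dim_vec x. (x $ k)^2)"

definition sup_norm :: "nat \<Rightarrow> (nat \<Rightarrow> real) \<Rightarrow> real" where
  "sup_norm n b = Max ((\<lambda>i. \<bar>b i\<bar>) ` {..<n})"

end

theory Submission
  imports Defs "Jordan_Normal_Form.Determinant"
begin

text \<open>
  Let \<open>x = A\<^sub>I\<^sup>-\<^sup>1 b\<^sub>I\<close> with \<open>\<parallel>x\<parallel> \<ge> R \<parallel>b\<parallel>\<^sub>\<infinity>\<close>. Cramer's rule
  \<open>x\<^sub>j det A\<^sub>I = \<Sum>\<^sub>k b\<^sub>k C\<^sub>k\<^sub>j\<close> gives \<open>R \<bar>det A\<^sub>I\<bar> \<le> d\<^sup>2 \<bar>C\<^sub>k\<^sub>j\<bar>\<close> for some column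
  \<open>j\<close> and the first row \<open>k\<close> maximising \<open>\<bar>C\<^sub>k\<^sub>j\<bar>\<close>. Expanding along column \<open>j\<close>,
  \<open>det A\<^sub>I\<close> is affine in the entry \<open>a\<^sub>k\<^sub>j\<close> with slope \<open>C\<^sub>k\<^sub>j\<close>, while the cofactors of
  column \<open>j\<close>, and hence the choice of \<open>k\<close>, do not depend on that column. Conditionally
  on all other entries the event thus confines the Gaussian \<open>a\<^sub>k\<^sub>j\<close> to an interval of
  length \<open>2d\<^sup>2/R\<close>, which has probability at most \<open>2d\<^sup>2/(R\<sigma>\<surd>(2\<pi>))\<close> times the
  probability that \<open>k\<close> is the first maximiser. As the latter events are disjoint in \<open>k\<close>,
  a union bound over the \<open>n choose d\<close> sets \<open>I\<close> and the \<open>d\<close> columns, together with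
  \<open>d (n choose d) \<le> n\<^sup>d\<close>, gives the claim.
\<close>

section \<open>Anti-concentration of a Gaussian coordinate\<close>

lemma normal_density_le:
  assumes "sg > 0"
  shows "normal_density m sg x \<le> 1 / (sg * sqrt (2 * pi))"
proof -
  have "sqrt (2 * pi * sg\<^sup>2) = sg * sqrt (2 * pi)"
    using assms by (simp add: real_sqrt_mult mult.commute)
  then show ?thesis
    using assms unfolding normal_density_def by (simp add: divide_right_mono)
qed

lemma emeasure_normal_density_interval_le:
  assumes "sg > 0" "s \<ge> 0"
  shows "emeasure (density lborel (normal_density m sg)) {c - s .. c + s}
    \<le> ennreal (2 * s / (sg * sqrt (2 * pi)))"
proof -
  have "emeasure (density lborel (normal_density m sg)) {c - s .. c + s}
      = (\<integral>\<^sup>+ x. ennreal (normal_density m sg x) * indicator {c - s .. c + s} x \<partial>lborel)"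
    by (subst emeasure_density) auto
  also have "\<dots> \<le> (\<integral>\<^sup>+ x. ennreal (1 / (sg * sqrt (2 * pi))) * indicator {c - s .. c + s} x \<partial>lborel)"
    using assms by (intro nn_integral_mono)
      (auto intro!: ennreal_leI normal_density_le split: split_indicator)
  also have "\<dots> = ennreal (1 / (sg * sqrt (2 * pi))) * ennreal (2 * s)"
    using assms by (subst nn_integral_cmult_indicator) auto
  also have "\<dots> = ennreal (2 * s / (sg * sqrt (2 * pi)))"
    using assms by (simp add: ennreal_mult'[symmetric])
  finally show ?thesis .
qed

lemma nn_integral_normal_density_affine_small_le:
  assumes "sg > 0" "s \<ge> 0" "g \<noteq> 0"
  shows "(\<integral>\<^sup>+ y. of_bool (\<bar>a + y * g\<bar> \<le> s * \<bar>g\<bar>) \<partial>density lborel (normal_density m sg))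
    \<le> ennreal (2 * s / (sg * sqrt (2 * pi)))"
proof -
  define c where "c = - a / g"
  have "\<bar>a + y * g\<bar> \<le> s * \<bar>g\<bar> \<longleftrightarrow> y \<in> {c - s .. c + s}" for y
  proof -
    have "\<bar>a + y * g\<bar> = \<bar>g\<bar> * \<bar>y - c\<bar>"
      using assms(3) by (simp add: c_def field_simps flip: abs_mult)
    then show ?thesis
      using assms(3) by (auto simp: mult.commute abs_le_iff)
  qed
  then have "(\<integral>\<^sup>+ y. of_bool (\<bar>a + y * g\<bar> \<le> s * \<bar>g\<bar>) \<partial>density lborel (normal_density m sg))
      = (\<integral>\<^sup>+ y. indicator {c - s .. c + s} y \<partial>density lborel (normal_density m sg))"
    by (simp add: of_bool_def indicator_def)
  also have "\<dots> = emeasure (density lborel (normal_density m sg)) {c - s .. c + s}"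
    by (rule nn_integral_indicator) simp
  also have "\<dots> \<le> ennreal (2 * s / (sg * sqrt (2 * pi)))"
    using assms(1,2) by (rule emeasure_normal_density_interval_le)
  finally show ?thesis .
qed

lemma (in product_sigma_finite) emeasure_PiM_le_fibrewise:
  assumes K: "finite K" "p \<in> K"
    and E: "E \<in> sets (PiM K M)" and H: "H \<in> sets (PiM K M)"
    and fibre_le: "\<And>x. x \<in> space (PiM (K - {p}) M) \<Longrightarrow>
      (\<integral>\<^sup>+ y. indicator E (x(p := y)) \<partial>M p) \<le> c * (\<integral>\<^sup>+ y. indicator H (x(p := y)) \<partial>M p)"
  shows "emeasure (PiM K M) E \<le> c * emeasure (PiM K M) H"
proof -
  have K': "finite (K - {p})" "p \<notin> K - {p}" and K_eq: "insert p (K - {p}) = K"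
    using K by auto
  note [measurable] = H measurable_add_dim[of p "K - {p}" M, unfolded split_beta' K_eq]
  have fibres: "emeasure (PiM K M) X
      = (\<integral>\<^sup>+ x. (\<integral>\<^sup>+ y. indicator X (x(p := y)) \<partial>M p) \<partial>PiM (K - {p}) M)"
    if "X \<in> sets (PiM K M)" for X
    using product_nn_integral_insert[OF K', of "indicator X"] that
    by (simp add: insert_absorb[OF K(2)] borel_measurable_indicator)
  have "emeasure (PiM K M) E \<le> (\<integral>\<^sup>+ x. c * (\<integral>\<^sup>+ y. indicator H (x(p := y)) \<partial>M p) \<partial>PiM (K - {p}) M)"
    unfolding fibres[OF E] by (intro nn_integral_mono fibre_le)
  also have "\<dots> = c * emeasure (PiM K M) H"
    unfolding fibres[OF H] by (intro nn_integral_cmult borel_measurable_nn_integral) measurable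
  finally show ?thesis .
qed

lemma sets_Collect_abs_le_mult_abs:
  fixes D G :: "'a \<Rightarrow> real"
  assumes "{x \<in> space M. P x} \<in> sets M" "D \<in> borel_measurable M" "G \<in> borel_measurable M"
  shows "{x \<in> space M. P x \<and> G x \<noteq> 0 \<and> \<bar>D x\<bar> \<le> s * \<bar>G x\<bar>} \<in> sets M"
proof -
  have "{x \<in> space M. P x \<and> G x \<noteq> 0 \<and> \<bar>D x\<bar> \<le> s * \<bar>G x\<bar>}
      = {x \<in> space M. P x} \<inter> {x \<in> space M. G x \<noteq> 0} \<inter> {x \<in> space M. \<bar>D x\<bar> \<le> s * \<bar>G x\<bar>}"
    by auto
  also have "\<dots> \<in> sets M"
    using assms by (intro sets.Int borel_measurable_neq borel_measurable_le borel_measurable_times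
        borel_measurable_abs borel_measurable_const)
  finally show ?thesis .
qed

lemma (in finite_measure) measure_le_mult_if_emeasure_le:
  assumes "emeasure M A \<le> ennreal c * emeasure M B" and "c \<ge> 0"
  shows "measure M A \<le> c * measure M B"
proof -
  have "ennreal (measure M A) \<le> ennreal (c * measure M B)"
    using assms by (simp add: emeasure_eq_measure ennreal_mult)
  then show ?thesis
    using assms(2) by (simp add: ennreal_le_iff)
qed

lemma measure_PiM_affine_in_normal_coordinate_le:
  fixes N :: "'i \<Rightarrow> real measure" and D G :: "('i \<Rightarrow> real) \<Rightarrow> real"
  assumes K: "finite K" "p \<in> K" and prob: "\<And>i. prob_space (N i)"
    and Np: "N p = density lborel (normal_density m sg)" and sg: "sg > 0" and s: "s \<ge> 0"
    and P_meas: "{x \<in> space (PiM K N). P x} \<in> sets (PiM K N)"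
    and D_meas: "D \<in> borel_measurable (PiM K N)" and G_meas: "G \<in> borel_measurable (PiM K N)"
    and D_upd: "\<And>x y. D (x(p := y)) = D x + (y - x p) * G x"
    and G_upd: "\<And>x y. G (x(p := y)) = G x"
    and P_upd: "\<And>x y. P (x(p := y)) = P x"
  shows "measure (PiM K N) {x \<in> space (PiM K N). P x \<and> G x \<noteq> 0 \<and> \<bar>D x\<bar> \<le> s * \<bar>G x\<bar>}
    \<le> 2 * s / (sg * sqrt (2 * pi)) * measure (PiM K N) {x \<in> space (PiM K N). P x}"
    (is "measure _ ?E \<le> ?C * measure _ ?H")
proof -
  interpret product_sigma_finite N
    using prob by (simp add: product_sigma_finite_def prob_space_imp_sigma_finite)
  interpret prob_space "PiM K N"
    using prob by (rule prob_space_PiM)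
  have C: "?C \<ge> 0"
    using sg s by simp
  have "emeasure (PiM K N) ?E \<le> ennreal ?C * emeasure (PiM K N) ?H"
  proof (rule emeasure_PiM_le_fibrewise[OF K _ P_meas])
    show "?E \<in> sets (PiM K N)"
      using P_meas D_meas G_meas by (rule sets_Collect_abs_le_mult_abs)
  next
    fix x assume x: "x \<in> space (PiM (K - {p}) N)"
    have upd_space: "x(p := y) \<in> space (PiM K N)" for y
      using x PiE_fun_upd[of y "\<lambda>i. space (N i)" p x "K - {p}"] K
      by (simp add: space_PiM Np insert_absorb)
    have "(\<integral>\<^sup>+ y. indicator ?E (x(p := y)) \<partial>N p) \<le> of_bool (P x) * ennreal ?C"
    proof (cases "P x \<and> G x \<noteq> 0")
      case True
      have "indicator ?E (x(p := y)) = (of_bool (\<bar>(D x - x p * G x) + y * G x\<bar> \<le> s * \<bar>G x\<bar>) :: ennreal)"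
        for y
        using upd_space True by (simp add: D_upd G_upd P_upd algebra_simps)
      then show ?thesis
        using nn_integral_normal_density_affine_small_le[OF sg s, of "G x"] True by (simp add: Np)
    qed (auto simp: G_upd P_upd)
    moreover have "(\<integral>\<^sup>+ y. indicator ?H (x(p := y)) \<partial>N p) = of_bool (P x)"
      using upd_space prob_space.emeasure_space_1[OF prob] by (simp add: P_upd)
    ultimately show "(\<integral>\<^sup>+ y. indicator ?E (x(p := y)) \<partial>N p)
      \<le> ennreal ?C * (\<integral>\<^sup>+ y. indicator ?H (x(p := y)) \<partial>N p)"
      by (simp add: mult.commute)
  qed
  then show ?thesis
    using C by (rule measure_le_mult_if_emeasure_le)
qed

section \<open>Cramer's rule and dominant cofactors\<close>

definition first_argmax :: "(nat \<Rightarrow> 'a::linorder) \<Rightarrow> nat \<Rightarrow> nat \<Rightarrow> bool" where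
  "first_argmax f d k \<longleftrightarrow> k < d \<and> (\<forall>i<d. f i \<le> f k) \<and> (\<forall>i<k. f i < f k)"

lemma first_argmax_exists:
  assumes "d > 0"
  shows "\<exists>k. first_argmax f d k"
proof -
  define P where "P k \<longleftrightarrow> k < d \<and> (\<forall>i<d. f i \<le> f k)" for k
  have "Max (f ` {..<d}) \<in> f ` {..<d}"
    using assms by (intro Max_in) auto
  then obtain k0 where "k0 < d" "f k0 = Max (f ` {..<d})"
    by (metis imageE lessThan_iff)
  then have "P k0"
    by (auto simp: P_def intro!: Max_ge)
  then have least: "P (Least P)"
    by (rule LeastI)
  have "f i < f (Least P)" if "i < Least P" for i
    using not_less_Least[OF that] least that by (auto simp: P_def not_le)
  then show ?thesis
    using least unfolding first_argmax_def P_def by blast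
qed

lemma first_argmax_unique:
  assumes "first_argmax f d k" "first_argmax f d k'"
  shows "k = k'"
proof -
  have "\<not> k < k'" if "first_argmax f d k" "first_argmax f d k'" for k k'
    using that unfolding first_argmax_def by (meson leD)
  then show ?thesis
    using assms by (meson linorder_neqE_nat)
qed

lemma solution_times_det_eq_cofactor_sum:
  fixes A :: "'a::comm_ring_1 mat"
  assumes A: "A \<in> carrier_mat d d" and x: "x \<in> carrier_vec d" and j: "j < d"
  shows "x $ j * det A = (\<Sum>k<d. (A *\<^sub>v x) $ k * cofactor A k j)"
proof -
  let ?A' = "replace_col A (A *\<^sub>v x) j"
  have "x $ j * det A = det ?A'"
    using cramer_lemma_mat[OF A x j] by simp
  also have "\<dots> = (\<Sum>k<d. ?A' $$ (k, j) * cofactor ?A' k j)"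
    using A j by (intro laplace_expansion_column) (auto simp: replace_col_def)
  also have "\<dots> = (\<Sum>k<d. (A *\<^sub>v x) $ k * cofactor A k j)"
  proof (intro sum.cong refl)
    fix k assume "k \<in> {..<d}"
    moreover have "mat_delete ?A' k j = mat_delete A k j"
      using A by (intro eq_matI) (auto simp: mat_delete_def replace_col_def)
    ultimately show "?A' $$ (k, j) * cofactor ?A' k j = (A *\<^sub>v x) $ k * cofactor A k j"
      using A j by (simp add: cofactor_def replace_col_def)
  qed
  finally show ?thesis .
qed

lemma abs_solution_times_det_le:
  fixes A :: "real mat" and x :: "real vec"
  assumes A: "A \<in> carrier_mat d d" and x: "x \<in> carrier_vec d" and j: "j < d"
    and Ax_le: "\<And>k. k < d \<Longrightarrow> \<bar>(A *\<^sub>v x) $ k\<bar> \<le> m"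
  shows "\<bar>x $ j\<bar> * \<bar>det A\<bar> \<le> m * (\<Sum>k<d. \<bar>cofactor A k j\<bar>)"
proof -
  have "\<bar>x $ j\<bar> * \<bar>det A\<bar> = \<bar>\<Sum>k<d. (A *\<^sub>v x) $ k * cofactor A k j\<bar>"
    by (simp flip: abs_mult solution_times_det_eq_cofactor_sum[OF A x j])
  also have "\<dots> \<le> (\<Sum>k<d. \<bar>(A *\<^sub>v x) $ k\<bar> * \<bar>cofactor A k j\<bar>)"
    by (rule order_trans[OF sum_abs]) (simp add: abs_mult)
  also have "\<dots> \<le> (\<Sum>k<d. m * \<bar>cofactor A k j\<bar>)"
    by (intro sum_mono mult_right_mono Ax_le) auto
  finally show ?thesis
    by (simp add: sum_distrib_left)
qed

lemma vnorm_le_sum_abs: "vnorm x \<le> (\<Sum>j<dim_vec x. \<bar>x $ j\<bar>)"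
  using L2_set_le_sum_abs[of "\<lambda>j. x $ j" "{..<dim_vec x}"] by (simp add: vnorm_def L2_set_def)

lemma exists_large_cofactor:
  fixes A :: "real mat" and x :: "real vec"
  assumes A: "A \<in> carrier_mat d d" and x: "x \<in> carrier_vec d" and d: "d > 0"
    and Ax_le: "\<And>k. k < d \<Longrightarrow> \<bar>(A *\<^sub>v x) $ k\<bar> \<le> m" and m: "m > 0"
    and large: "R * m \<le> vnorm x"
  shows "\<exists>j<d. \<exists>k<d. R * \<bar>det A\<bar> \<le> real d ^ 2 * \<bar>cofactor A k j\<bar>"
proof (rule ccontr)
  assume "\<not> ?thesis"
  then have small: "real d ^ 2 * \<bar>cofactor A k j\<bar> < R * \<bar>det A\<bar>" if "j < d" "k < d" for j k
    using that by force
  have "m * (R * \<bar>det A\<bar>) \<le> vnorm x * \<bar>det A\<bar>"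
    using mult_right_mono[OF large abs_ge_zero[of "det A"]] by (simp add: ac_simps)
  also have "\<dots> \<le> (\<Sum>j<d. \<bar>x $ j\<bar> * \<bar>det A\<bar>)"
    using vnorm_le_sum_abs[of x] x by (simp add: mult_right_mono flip: sum_distrib_right)
  also have "\<dots> \<le> (\<Sum>j<d. m * (\<Sum>k<d. \<bar>cofactor A k j\<bar>))"
    by (intro sum_mono abs_solution_times_det_le[OF A x _ Ax_le]) auto
  finally have "m * (R * \<bar>det A\<bar>) \<le> m * (\<Sum>j<d. \<Sum>k<d. \<bar>cofactor A k j\<bar>)"
    by (simp add: sum_distrib_left)
  then have "R * \<bar>det A\<bar> \<le> (\<Sum>j<d. \<Sum>k<d. \<bar>cofactor A k j\<bar>)"
    using m by simp
  then have "real d ^ 2 * (R * \<bar>det A\<bar>) \<le> (\<Sum>j<d. \<Sum>k<d. real d ^ 2 * \<bar>cofactor A k j\<bar>)"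
    by (simp add: mult_left_mono flip: sum_distrib_left)
  also have "\<dots> < (\<Sum>j<d. \<Sum>k<d. R * \<bar>det A\<bar>)"
    using d by (intro sum_strict_mono small) auto
  also have "\<dots> = real d ^ 2 * (R * \<bar>det A\<bar>)"
    by (simp add: power2_eq_square)
  finally show False
    by simp
qed

lemma large_solution_imp_dominant_cofactor:
  fixes A B :: "real mat" and v :: "real vec"
  assumes A: "A \<in> carrier_mat d d" and inv: "mat_inverse A = Some B"
    and v: "v \<in> carrier_vec d" and d: "d > 0"
    and v_le: "\<And>k. k < d \<Longrightarrow> \<bar>v $ k\<bar> \<le> m" and m: "m > 0" and R: "R > 0"
    and large: "R * m \<le> vnorm (B *\<^sub>v v)"
  shows "\<exists>j<d. \<exists>k. first_argmax (\<lambda>i. \<bar>cofactor A i j\<bar>) d k \<and> cofactor A k j \<noteq> 0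
    \<and> \<bar>det A\<bar> \<le> real d ^ 2 / R * \<bar>cofactor A k j\<bar>"
proof -
  have B: "A * B = 1\<^sub>m d" "B \<in> carrier_mat d d"
    using mat_inverse(2)[OF A inv] by auto
  then have "A *\<^sub>v (B *\<^sub>v v) = v"
    using A v by (metis assoc_mult_mat_vec one_mult_mat_vec)
  then obtain j k0 where jk0: "j < d" "k0 < d" "R * \<bar>det A\<bar> \<le> real d ^ 2 * \<bar>cofactor A k0 j\<bar>"
    using exists_large_cofactor[OF A _ d _ m large] B v v_le by auto
  obtain k where k: "first_argmax (\<lambda>i. \<bar>cofactor A i j\<bar>) d k"
    using first_argmax_exists d by blast
  then have "\<bar>cofactor A k0 j\<bar> \<le> \<bar>cofactor A k j\<bar>"
    using jk0(2) unfolding first_argmax_def by blast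
  then have "R * \<bar>det A\<bar> \<le> real d ^ 2 * \<bar>cofactor A k j\<bar>"
    using jk0(3) mult_left_mono[of _ _ "real d ^ 2"] by force
  then have "\<bar>det A\<bar> \<le> real d ^ 2 / R * \<bar>cofactor A k j\<bar>"
    using R by (simp add: field_simps)
  moreover have "det A \<noteq> 0"
    using det_mult[OF A B(2)] B(1) by auto
  ultimately show ?thesis
    using jk0(1) k by fastforce
qed

section \<open>Submatrices of a Gaussian matrix\<close>

lemma det_mat_measurable:
  fixes f :: "'a \<Rightarrow> nat \<times> nat \<Rightarrow> real"
  assumes "\<And>a b. a < m \<Longrightarrow> b < m \<Longrightarrow> (\<lambda>x. f x (a, b)) \<in> borel_measurable M"
  shows "(\<lambda>x. det (mat m m (f x))) \<in> borel_measurable M"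
proof -
  have "det (mat m m (f x)) = (\<Sum>p\<in>{p. p permutes {0..<m}}. signof p * (\<Prod>i=0..<m. f x (i, p i)))"
    for x
    by (subst det_def'[of _ m]) (auto intro!: sum.cong prod.cong dest: permutes_in_image)
  moreover have "(\<lambda>x. \<Sum>p\<in>{p. p permutes {0..<m}}. signof p * (\<Prod>i=0..<m. f x (i, p i)))
      \<in> borel_measurable M"
    by (intro borel_measurable_sum borel_measurable_times borel_measurable_prod
        borel_measurable_const assms) (auto dest: permutes_in_image)
  ultimately show ?thesis
    by simp
qed

lemma prob_space_gauss_matrix_measure:
  "sg > 0 \<Longrightarrow> prob_space (gauss_matrix_measure n d mu sg)"
  unfolding gauss_matrix_measure_def
  by (intro prob_space_PiM) (auto simp: prob_space_normal_density split: prod.split)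

lemma gauss_matrix_entry_measurable:
  assumes "i < n" "j < d"
  shows "(\<lambda>A. A (i, j)) \<in> borel_measurable (gauss_matrix_measure n d mu sg)"
proof -
  let ?N = "\<lambda>(i, j). density lborel (normal_density (mu i j) sg)"
  have "(\<lambda>A. A (i, j)) \<in> measurable (PiM ({..<n} \<times> {..<d}) ?N) (?N (i, j))"
    using assms by (intro measurable_component_singleton) auto
  also have "measurable (PiM ({..<n} \<times> {..<d}) ?N) (?N (i, j))
      = borel_measurable (PiM ({..<n} \<times> {..<d}) ?N)"
    by (rule measurable_cong_sets) auto
  finally show ?thesis
    unfolding gauss_matrix_measure_def .
qed

lemma measure_gauss_matrix_affine_in_entry_le:
  fixes n d :: nat and mu :: "nat \<Rightarrow> nat \<Rightarrow> real" and sg :: real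
    and D G :: "(nat \<times> nat \<Rightarrow> real) \<Rightarrow> real"
  defines "M \<equiv> gauss_matrix_measure n d mu sg"
  assumes "sg > 0" and "s \<ge> 0" and "i < n" "j < d"
    and "{A \<in> space M. P A} \<in> sets M"
    and "D \<in> borel_measurable M" and "G \<in> borel_measurable M"
    and "\<And>A y. D (A((i, j) := y)) = D A + (y - A (i, j)) * G A"
    and "\<And>A y. G (A((i, j) := y)) = G A"
    and "\<And>A y. P (A((i, j) := y)) = P A"
  shows "measure M {A \<in> space M. P A \<and> G A \<noteq> 0 \<and> \<bar>D A\<bar> \<le> s * \<bar>G A\<bar>}
    \<le> 2 * s / (sg * sqrt (2 * pi)) * measure M {A \<in> space M. P A}"
  using assms(2-) unfolding M_def gauss_matrix_measure_def
  by (intro measure_PiM_affine_in_normal_coordinate_le[where m = "mu i j"])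
    (auto simp: prob_space_normal_density split: prod.split)

lemma sub_rows_index [simp]:
  "a < d \<Longrightarrow> b < d \<Longrightarrow> sub_rows d A I $$ (a, b) = A (sorted_list_of_set I ! a, b)"
  by (simp add: sub_rows_def)

lemma sub_rows_carrier: "sub_rows d A I \<in> carrier_mat d d"
  by (simp add: sub_rows_def)

lemma sub_vec_carrier: "sub_vec d b I \<in> carrier_vec d"
  by (simp add: sub_vec_def)

lemma sorted_list_of_set_nth_mem: "card I = d \<Longrightarrow> a < d \<Longrightarrow> sorted_list_of_set I ! a \<in> I"
  by (metis card.infinite length_sorted_list_of_set not_less_zero nth_mem set_sorted_list_of_set)

lemma sub_rows_entry_measurable:
  assumes I: "I \<subseteq> {..<n}" "card I = d" and ab: "a < d" "b < d"
  shows "(\<lambda>A. sub_rows d A I $$ (a, b)) \<in> borel_measurable (gauss_matrix_measure n d mu sg)"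
  using gauss_matrix_entry_measurable sorted_list_of_set_nth_mem[OF I(2) ab(1)] I ab by auto

lemma det_sub_rows_measurable:
  assumes I: "I \<subseteq> {..<n}" "card I = d"
  shows "(\<lambda>A. det (sub_rows d A I)) \<in> borel_measurable (gauss_matrix_measure n d mu sg)"
  unfolding sub_rows_def
  using sub_rows_entry_measurable[OF I] by (intro det_mat_measurable) simp

lemma cofactor_sub_rows_measurable:
  assumes I: "I \<subseteq> {..<n}" "card I = d"
  shows "(\<lambda>A. cofactor (sub_rows d A I) k j) \<in> borel_measurable (gauss_matrix_measure n d mu sg)"
proof -
  have "(\<lambda>A. (-1) ^ (k + j) * det (mat (d - 1) (d - 1) (\<lambda>(a, b).
      sub_rows d A I $$ (if a < k then a else Suc a, if b < j then b else Suc b))))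
    \<in> borel_measurable (gauss_matrix_measure n d mu sg)"
    by (intro borel_measurable_times borel_measurable_const det_mat_measurable)
      (auto simp del: sub_rows_index intro!: sub_rows_entry_measurable[OF I])
  then show ?thesis
    by (simp add: cofactor_def mat_delete_def carrier_matD[OF sub_rows_carrier])
qed

lemma cofactor_sub_rows_fun_upd_column:
  "cofactor (sub_rows d (A((i, j) := y)) I) k j = cofactor (sub_rows d A I) k j"
proof -
  have "mat_delete (sub_rows d (A((i, j) := y)) I) k j = mat_delete (sub_rows d A I) k j"
    by (intro eq_matI) (auto simp: mat_delete_def sub_rows_def)
  then show ?thesis
    by (simp add: cofactor_def)
qed

lemma det_sub_rows_fun_upd:
  assumes I: "card I = d" and k: "k < d" and j: "j < d"
  shows "det (sub_rows d (A((sorted_list_of_set I ! k, j) := y)) I)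
    = det (sub_rows d A I) + (y - A (sorted_list_of_set I ! k, j)) * cofactor (sub_rows d A I) k j"
proof -
  let ?L = "sorted_list_of_set I"
  let ?A' = "A((?L ! k, j) := y)"
  have "finite I"
    using I k card.infinite by fastforce
  then have "distinct ?L" "length ?L = d"
    using I by auto
  then have entry: "sub_rows d ?A' I $$ (i, j)
      = sub_rows d A I $$ (i, j) + (if i = k then y - A (?L ! k, j) else 0)" if "i < d" for i
    using that j k by (auto simp: nth_eq_iff_index_eq)
  have "det (sub_rows d ?A' I) = (\<Sum>i<d. sub_rows d ?A' I $$ (i, j) * cofactor (sub_rows d ?A' I) i j)"
    by (rule laplace_expansion_column[OF sub_rows_carrier j])
  also have "\<dots> = (\<Sum>i<d. sub_rows d A I $$ (i, j) * cofactor (sub_rows d A I) i j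
      + (if i = k then (y - A (?L ! k, j)) * cofactor (sub_rows d A I) k j else 0))"
    by (intro sum.cong refl) (auto simp: entry cofactor_sub_rows_fun_upd_column distrib_right)
  also have "\<dots> = det (sub_rows d A I) + (y - A (?L ! k, j)) * cofactor (sub_rows d A I) k j"
    using k by (simp add: sum.distrib laplace_expansion_column[OF sub_rows_carrier j])
  finally show ?thesis .
qed

lemma sets_Collect_first_argmax:
  fixes f :: "nat \<Rightarrow> 'a \<Rightarrow> real"
  assumes "\<And>i. f i \<in> borel_measurable M"
  shows "{x \<in> space M. first_argmax (\<lambda>i. f i x) d k} \<in> sets M"
  unfolding first_argmax_def using assms
  by (intro sets.sets_Collect borel_measurable_le borel_measurable_less)

definition small_det_event :: "nat \<Rightarrow> real \<Rightarrow> nat set \<Rightarrow> nat \<Rightarrow> nat \<Rightarrow> (nat \<times> nat \<Rightarrow> real) set"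
  where "small_det_event d T I j k = {A.
    first_argmax (\<lambda>i. \<bar>cofactor (sub_rows d A I) i j\<bar>) d k \<and> cofactor (sub_rows d A I) k j \<noteq> 0
    \<and> \<bar>det (sub_rows d A I)\<bar> \<le> T * \<bar>cofactor (sub_rows d A I) k j\<bar>}"

lemma small_det_event_Int_space:
  "small_det_event d T I j k \<inter> space M = {A \<in> space M.
    first_argmax (\<lambda>i. \<bar>cofactor (sub_rows d A I) i j\<bar>) d k \<and> cofactor (sub_rows d A I) k j \<noteq> 0
    \<and> \<bar>det (sub_rows d A I)\<bar> \<le> T * \<bar>cofactor (sub_rows d A I) k j\<bar>}"
  by (auto simp: small_det_event_def)

lemma sets_small_det_event:
  assumes I: "I \<subseteq> {..<n}" "card I = d"
  shows "small_det_event d T I j k \<inter> space (gauss_matrix_measure n d mu sg)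
    \<in> sets (gauss_matrix_measure n d mu sg)"
  unfolding small_det_event_Int_space
  by (intro sets_Collect_abs_le_mult_abs sets_Collect_first_argmax borel_measurable_abs
      det_sub_rows_measurable[OF I] cofactor_sub_rows_measurable[OF I])

lemma measure_small_det_event_le:
  fixes n d :: nat and mu :: "nat \<Rightarrow> nat \<Rightarrow> real" and sg :: real
  defines "M \<equiv> gauss_matrix_measure n d mu sg"
  assumes sg: "sg > 0" and T: "T \<ge> 0" and I: "I \<subseteq> {..<n}" "card I = d" and j: "j < d"
  shows "measure M (\<Union>k<d. small_det_event d T I j k \<inter> space M) \<le> 2 * T / (sg * sqrt (2 * pi))"
proof -
  let ?C = "2 * T / (sg * sqrt (2 * pi))"
  let ?cof = "\<lambda>k A. cofactor (sub_rows d A I) k j"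
  define Dom where "Dom k = {A \<in> space M. first_argmax (\<lambda>i. \<bar>?cof i A\<bar>) d k}" for k
  interpret prob_space M
    unfolding M_def using sg by (rule prob_space_gauss_matrix_measure)
  have Dom_sets: "Dom k \<in> sets M" for k
    unfolding Dom_def M_def
    by (intro sets_Collect_first_argmax borel_measurable_abs cofactor_sub_rows_measurable[OF I])
  have event_le: "measure M (small_det_event d T I j k \<inter> space M) \<le> ?C * measure M (Dom k)"
    if k: "k < d" for k
    unfolding small_det_event_Int_space Dom_def M_def
    using sorted_list_of_set_nth_mem[OF I(2) k] I j k Dom_sets[of k]
    by (intro measure_gauss_matrix_affine_in_entry_le sg T)
      (auto simp: Dom_def M_def det_sub_rows_fun_upd cofactor_sub_rows_fun_upd_column
        intro: det_sub_rows_measurable cofactor_sub_rows_measurable)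
  have "disjoint_family_on Dom {..<d}"
    unfolding disjoint_family_on_def Dom_def using first_argmax_unique by blast
  then have "(\<Sum>k<d. measure M (Dom k)) = measure M (\<Union>k<d. Dom k)"
    using Dom_sets by (intro finite_measure_finite_Union[symmetric]) auto
  then have Dom_sum: "(\<Sum>k<d. measure M (Dom k)) \<le> 1"
    by simp
  have "measure M (\<Union>k<d. small_det_event d T I j k \<inter> space M)
      \<le> (\<Sum>k<d. measure M (small_det_event d T I j k \<inter> space M))"
    using sets_small_det_event[OF I] by (intro measure_UNION_le) (auto simp: M_def)
  also have "\<dots> \<le> (\<Sum>k<d. ?C * measure M (Dom k))"
    by (intro sum_mono event_le) auto
  also have "\<dots> = ?C * (\<Sum>k<d. measure M (Dom k))"
    by (rule sum_distrib_left[symmetric])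
  also have "\<dots> \<le> ?C"
    using Dom_sum sg T by (intro mult_left_le) auto
  finally show ?thesis .
qed

lemma abs_le_sup_norm: "i < n \<Longrightarrow> \<bar>b i\<bar> \<le> sup_norm n b"
  unfolding sup_norm_def by (intro Max_ge) auto

lemma large_solution_event_subset:
  assumes d: "d > 0" and R: "R > 0" and b: "\<exists>i<n. b i \<noteq> 0"
  shows "{A \<in> space M. \<exists>I. I \<subseteq> {..<n} \<and> card I = d \<and>
      (\<exists>B. mat_inverse (sub_rows d A I) = Some B \<and> vnorm (B *\<^sub>v sub_vec d b I) \<ge> R * sup_norm n b)}
    \<subseteq> (\<Union>I\<in>{I. I \<subseteq> {..<n} \<and> card I = d}. \<Union>j<d. \<Union>k<d.
      small_det_event d (real d ^ 2 / R) I j k \<inter> space M)"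
    (is "?bad \<subseteq> _")
proof
  fix A assume "A \<in> ?bad"
  then obtain I B where A: "A \<in> space M" and I: "I \<subseteq> {..<n}" "card I = d"
    and inv: "mat_inverse (sub_rows d A I) = Some B"
    and large: "R * sup_norm n b \<le> vnorm (B *\<^sub>v sub_vec d b I)"
    by blast
  have "\<bar>sub_vec d b I $ k\<bar> \<le> sup_norm n b" if "k < d" for k
    using sorted_list_of_set_nth_mem[OF I(2) that] I that abs_le_sup_norm
    by (auto simp: sub_vec_def)
  moreover have "sup_norm n b > 0"
    using b abs_le_sup_norm[of _ n b] by force
  ultimately obtain j k where "j < d" "k < d" "A \<in> small_det_event d (real d ^ 2 / R) I j k"
    using large_solution_imp_dominant_cofactor[OF sub_rows_carrier inv sub_vec_carrier d _ _ R large]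
    unfolding small_det_event_def first_argmax_def by auto
  then show "A \<in> (\<Union>I\<in>{I. I \<subseteq> {..<n} \<and> card I = d}. \<Union>j<d. \<Union>k<d.
      small_det_event d (real d ^ 2 / R) I j k \<inter> space M)"
    using A I by blast
qed

lemma mult_choose_le_power: "d * (n choose d) \<le> n ^ d"
proof (cases d)
  case (Suc k)
  have "(n - 1) choose k \<le> (n - 1) ^ k"
    by (cases "k \<le> n - 1") (auto simp: binomial_le_pow binomial_eq_0)
  also have "\<dots> \<le> n ^ k"
    by (simp add: power_mono)
  finally have "n * ((n - 1) choose k) \<le> n ^ d"
    using Suc by simp
  then show ?thesis
    by (simp only: Suc binomial_absorption)
qed simp

theorem lemma4p24:
  fixes n d :: nat and mu :: "nat \<Rightarrow> nat \<Rightarrow> real" and sg R :: real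
    and b :: "nat \<Rightarrow> real"
  assumes "d \<ge> 1" and "sg > 0" and "R > 0"
    and "\<exists>i<n. b i \<noteq> 0"
  shows "measure (gauss_matrix_measure n d mu sg)
           {A \<in> space (gauss_matrix_measure n d mu sg).
              \<exists>I. I \<subseteq> {..<n} \<and> card I = d \<and>
                  (\<exists>B. mat_inverse (sub_rows d A I) = Some B \<and>
                       vnorm (B *\<^sub>v sub_vec d b I) \<ge> R * sup_norm n b)}
         \<le> 2 * real d ^ 2 * real n ^ d / (sg * R * sqrt (2 * pi))"
proof -
  let ?M = "gauss_matrix_measure n d mu sg"
  let "measure _ ?bad \<le> _" = ?thesis
  define T where "T = real d ^ 2 / R"
  define Is where "Is = {I. I \<subseteq> {..<n} \<and> card I = d}"
  define S where "S I j = (\<Union>k<d. small_det_event d T I j k \<inter> space ?M)" for I j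
  interpret prob_space ?M
    using \<open>sg > 0\<close> by (rule prob_space_gauss_matrix_measure)
  have Is: "finite Is" "card Is = n choose d"
    unfolding Is_def by (auto simp: n_subsets)
  have S_sets: "S I j \<in> sets ?M" if "I \<in> Is" for I j
    using that unfolding S_def Is_def by (intro sets.finite_UN sets_small_det_event) auto
  have "?bad \<subseteq> (\<Union>I\<in>Is. \<Union>j<d. S I j)"
    using large_solution_event_subset[of d R n b ?M] assms unfolding S_def Is_def T_def by simp
  then have "measure ?M ?bad \<le> measure ?M (\<Union>I\<in>Is. \<Union>j<d. S I j)"
    using S_sets Is by (intro finite_measure_mono) auto
  also have "\<dots> \<le> (\<Sum>I\<in>Is. measure ?M (\<Union>j<d. S I j))"
    using S_sets Is by (intro measure_UNION_le) auto
  also have "\<dots> \<le> (\<Sum>I\<in>Is. \<Sum>j<d. measure ?M (S I j))"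
    using S_sets by (intro sum_mono measure_UNION_le) auto
  also have "\<dots> \<le> (\<Sum>I\<in>Is. \<Sum>j<d. 2 * T / (sg * sqrt (2 * pi)))"
    using \<open>sg > 0\<close> \<open>R > 0\<close> unfolding S_def Is_def T_def
    by (intro sum_mono measure_small_det_event_le) auto
  also have "\<dots> = real (d * (n choose d)) * (2 * T / (sg * sqrt (2 * pi)))"
    using Is by simp
  also have "\<dots> \<le> real (n ^ d) * (2 * T / (sg * sqrt (2 * pi)))"
    using \<open>sg > 0\<close> \<open>R > 0\<close> unfolding T_def
    by (intro mult_right_mono of_nat_mono mult_choose_le_power) simp_all
  also have "\<dots> = 2 * real d ^ 2 * real n ^ d / (sg * R * sqrt (2 * pi))"
    by (simp add: T_def ac_simps)
  finally show ?thesis .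
qed

end
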